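(* Let $\varphi : X \to X$ be a morphism in $\mathscr{C}$ and let $\kappa : K \to X$ be a kernel of $\varphi$. Then $\varphi$ has a core inverse if and only if $\varphi$ has a cokernel $\lambda : X \to L$ such that both $\kappa\lambda : K \to L$ and $\varphi^{*}\varphi^{3}+\kappa^{*}\kappa : X \to X$ are invertible. In this case, $\gamma=\lambda(\kappa\lambda)^{-1} : X \to K$ is a cokernel of $\varphi$, $\varphi^{\mathrm{core}}\varphi+\gamma\kappa=1_X$, and $$\varphi^{\mathrm{core}}=\varphi^{2}(\varphi^{*}\varphi^{3}+\kappa^{*}\kappa)^{-1}\varphi^{*}.$$
   Context: $\mathscr{C}$ is an additive category with an involution $*$: a map on morphisms sending $\varphi : X\to Y$ to $\varphi^* : Y \to X$ such that $(\varphi^* )^*=\varphi$, $(\varphi\psi)^*=\psi^*\varphi^*$ and $(\varphi+\phi)^*=\varphi^*+\phi^*$. Composition is written left to right: for $\varphi : X\to Y$ and $\psi : Y\to Z$, $\varphi\psi : X \to Z$ means "first $\varphi$, then $\psi$"; powers $\varphi^n$ of an endomorphism are the $n$-fold composites. A kernel of $\varphi : X\to Y$ is a morphism $\kappa : K\to X$ with $\kappa\varphi=0$ such that every $\alpha : M\to X$ with $\alpha\varphi=0$ factors uniquely as $\alpha=\alpha'\kappa$. A cokernel of $\varphi$ is a morphism $\lambda : Y\to L$ with $\varphi\lambda=0$ such that every $\beta : Y\to M$ with $\varphi\beta=0$ factors uniquely as $\beta=\lambda\beta'$. A morphism is invertible if it has a two-sided inverse. For $\varphi : X\to X$, a core inverse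 of $\varphi$ is a morphism $\chi : X\to X$ with $(\varphi\chi)^*=\varphi\chi$, $\varphi\chi^2=\chi$ and $\chi\varphi^2=\varphi$. It is unique when it exists and is denoted $\varphi^{\mathrm{core}}$. *)

theory Defs
  imports Main
begin

text \<open>An additive category with involution, presented by hom-sets.
  Composition is diagrammatic: cmp f g means first f, then g.\<close>

record ('o, 'm) icat =
  Obj  :: "'o set"
  Hom  :: "'o \<Rightarrow> 'o \<Rightarrow> 'm set"
  cmp  :: "'m \<Rightarrow> 'm \<Rightarrow> 'm"
  idm  :: "'o \<Rightarrow> 'm"
  zer  :: "'o \<Rightarrow> 'o \<Rightarrow> 'm"
  addm :: "'m \<Rightarrow> 'm \<Rightarrow> 'm"
  negm :: "'m \<Rightarrow> 'm"
  star :: "'m \<Rightarrow> 'm"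

definition is_category :: "('o, 'm) icat \<Rightarrow> bool" where
  "is_category C \<longleftrightarrow>
     (\<forall>A B. Hom C A B \<noteq> {} \<longrightarrow> A \<in> Obj C \<and> B \<in> Obj C) \<and>
     (\<forall>A B A' B' f. f \<in> Hom C A B \<and> f \<in> Hom C A' B' \<longrightarrow> A = A' \<and> B = B') \<and>
     (\<forall>A \<in> Obj C. idm C A \<in> Hom C A A) \<and>
     (\<forall>A B D f g. f \<in> Hom C A B \<and> g \<in> Hom C B D \<longrightarrow> cmp C f g \<in> Hom C A D) \<and>
     (\<forall>A B D E f g h. f \<in> Hom C A B \<and> g \<in> Hom C B D \<and> h \<in> Hom C D E \<longrightarrow>
        cmp C (cmp C f g) h = cmp C f (cmp C g h)) \<and>
     (\<forall>A B f. f \<in> Hom C A B \<longrightarrow> cmp C (idm C A) f = f \<and> cmp C f (idm C B) = f)"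

definition is_preadditive :: "('o, 'm) icat \<Rightarrow> bool" where
  "is_preadditive C \<longleftrightarrow> is_category C \<and>
     (\<forall>A \<in> Obj C. \<forall>B \<in> Obj C. zer C A B \<in> Hom C A B) \<and>
     (\<forall>A B f g. f \<in> Hom C A B \<and> g \<in> Hom C A B \<longrightarrow> addm C f g \<in> Hom C A B) \<and>
     (\<forall>A B f. f \<in> Hom C A B \<longrightarrow> negm C f \<in> Hom C A B) \<and>
     (\<forall>A B f g h. f \<in> Hom C A B \<and> g \<in> Hom C A B \<and> h \<in> Hom C A B \<longrightarrow>
        addm C (addm C f g) h = addm C f (addm C g h)) \<and>
     (\<forall>A B f g. f \<in> Hom C A B \<and> g \<in> Hom C A B \<longrightarrow> addm C f g = addm C g f) \<and>
     (\<forall>A B f. f \<in> Hom C A B \<longrightarrow> addm C f (zer C A B) = f) \<and>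
     (\<forall>A B f. f \<in> Hom C A B \<longrightarrow> addm C f (negm C f) = zer C A B) \<and>
     (\<forall>A B D f g h. f \<in> Hom C A B \<and> g \<in> Hom C B D \<and> h \<in> Hom C B D \<longrightarrow>
        cmp C f (addm C g h) = addm C (cmp C f g) (cmp C f h)) \<and>
     (\<forall>A B D f g h. f \<in> Hom C A B \<and> g \<in> Hom C A B \<and> h \<in> Hom C B D \<longrightarrow>
        cmp C (addm C f g) h = addm C (cmp C f h) (cmp C g h))"

definition is_additive :: "('o, 'm) icat \<Rightarrow> bool" where
  "is_additive C \<longleftrightarrow> is_preadditive C \<and>
     (\<exists>Z \<in> Obj C. idm C Z = zer C Z Z) \<and>
     (\<forall>A \<in> Obj C. \<forall>B \<in> Obj C. \<exists>S \<in> Obj C. \<exists>p1 p2 i1 i2.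
        p1 \<in> Hom C S A \<and> p2 \<in> Hom C S B \<and> i1 \<in> Hom C A S \<and> i2 \<in> Hom C B S \<and>
        cmp C i1 p1 = idm C A \<and> cmp C i2 p2 = idm C B \<and>
        cmp C i1 p2 = zer C A B \<and> cmp C i2 p1 = zer C B A \<and>
        addm C (cmp C p1 i1) (cmp C p2 i2) = idm C S)"

definition is_additive_inv_cat :: "('o, 'm) icat \<Rightarrow> bool" where
  "is_additive_inv_cat C \<longleftrightarrow> is_additive C \<and>
     (\<forall>A B f. f \<in> Hom C A B \<longrightarrow> star C f \<in> Hom C B A) \<and>
     (\<forall>A B f. f \<in> Hom C A B \<longrightarrow> star C (star C f) = f) \<and>
     (\<forall>A B D f g. f \<in> Hom C A B \<and> g \<in> Hom C B D \<longrightarrow>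
        star C (cmp C f g) = cmp C (star C g) (star C f)) \<and>
     (\<forall>A B f g. f \<in> Hom C A B \<and> g \<in> Hom C A B \<longrightarrow>
        star C (addm C f g) = addm C (star C f) (star C g))"

definition is_kernel :: "('o, 'm) icat \<Rightarrow> 'o \<Rightarrow> 'o \<Rightarrow> 'm \<Rightarrow> 'o \<Rightarrow> 'm \<Rightarrow> bool" where
  "is_kernel C X Y \<phi> K \<kappa> \<longleftrightarrow>
     \<kappa> \<in> Hom C K X \<and> cmp C \<kappa> \<phi> = zer C K Y \<and>
     (\<forall>M \<alpha>. \<alpha> \<in> Hom C M X \<and> cmp C \<alpha> \<phi> = zer C M Y \<longrightarrow>
        (\<exists>!\<alpha>'. \<alpha>' \<in> Hom C M K \<and> \<alpha> = cmp C \<alpha>' \<kappa>))"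

definition is_cokernel :: "('o, 'm) icat \<Rightarrow> 'o \<Rightarrow> 'o \<Rightarrow> 'm \<Rightarrow> 'o \<Rightarrow> 'm \<Rightarrow> bool" where
  "is_cokernel C X Y \<phi> L lm \<longleftrightarrow>
     lm \<in> Hom C Y L \<and> cmp C \<phi> lm = zer C X L \<and>
     (\<forall>M \<beta>. \<beta> \<in> Hom C Y M \<and> cmp C \<phi> \<beta> = zer C X M \<longrightarrow>
        (\<exists>!\<beta>'. \<beta>' \<in> Hom C L M \<and> \<beta> = cmp C lm \<beta>'))"

definition is_inverse :: "('o, 'm) icat \<Rightarrow> 'o \<Rightarrow> 'o \<Rightarrow> 'm \<Rightarrow> 'm \<Rightarrow> bool" where
  "is_inverse C A B f g \<longleftrightarrow> f \<in> Hom C A B \<and> g \<in> Hom C B A \<and>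
     cmp C f g = idm C A \<and> cmp C g f = idm C B"

definition invertible :: "('o, 'm) icat \<Rightarrow> 'o \<Rightarrow> 'o \<Rightarrow> 'm \<Rightarrow> bool" where
  "invertible C A B f \<longleftrightarrow> (\<exists>g. is_inverse C A B f g)"

definition minv :: "('o, 'm) icat \<Rightarrow> 'o \<Rightarrow> 'o \<Rightarrow> 'm \<Rightarrow> 'm" where
  "minv C A B f = (THE g. is_inverse C A B f g)"

definition is_core_inverse :: "('o, 'm) icat \<Rightarrow> 'o \<Rightarrow> 'm \<Rightarrow> 'm \<Rightarrow> bool" where
  "is_core_inverse C X \<phi> \<chi> \<longleftrightarrow> \<chi> \<in> Hom C X X \<and>
     star C (cmp C \<phi> \<chi>) = cmp C \<phi> \<chi> \<and>
     cmp C \<phi> (cmp C \<chi> \<chi>) = \<chi> \<and>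
     cmp C \<chi> (cmp C \<phi> \<phi>) = \<phi>"

definition has_core_inverse :: "('o, 'm) icat \<Rightarrow> 'o \<Rightarrow> 'm \<Rightarrow> bool" where
  "has_core_inverse C X \<phi> \<longleftrightarrow> (\<exists>\<chi>. is_core_inverse C X \<phi> \<chi>)"

definition core_inv :: "('o, 'm) icat \<Rightarrow> 'o \<Rightarrow> 'm \<Rightarrow> 'm" where
  "core_inv C X \<phi> = (THE \<chi>. is_core_inverse C X \<phi> \<chi>)"

end

theory Submission
  imports Defs
begin

text \<open>If \<open>\<chi>\<close> is a core inverse of \<open>\<phi>\<close>, then \<open>1 - \<chi>\<phi>\<close> annihilates \<open>\<phi>\<close> and
  so factors as \<open>\<gamma>\<kappa>\<close> through the kernel; this \<open>\<gamma>\<close> is a retraction of \<open>\<kappa>\<close> with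
  \<open>\<phi>\<gamma> = 0\<close>, whence \<open>\<chi>\<phi> + \<gamma>\<kappa> = 1\<close>, \<open>\<gamma>\<close> is a cokernel of \<open>\<phi>\<close>, and
  \<open>\<chi>\<^sup>3\<chi>\<^sup>* + \<gamma>\<gamma>\<^sup>*\<close> inverts \<open>\<phi>\<^sup>*\<phi>\<^sup>3 + \<kappa>\<^sup>*\<kappa>\<close>.
  Conversely, a cokernel \<open>\<lambda>\<close> with \<open>\<kappa>\<lambda>\<close> invertible gives such a retraction
  \<open>\<gamma> = \<lambda>(\<kappa>\<lambda>)\<^sup>-\<^sup>1\<close>; if \<open>w\<close> inverts \<open>\<phi>\<^sup>*\<phi>\<^sup>3 + \<kappa>\<^sup>*\<kappa>\<close>, then \<open>w\<kappa>\<^sup>* = \<gamma>\<close>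
  and \<open>\<kappa>w = \<gamma>\<^sup>*\<close>, and the core inverse axioms for \<open>\<phi>\<^sup>2w\<phi>\<^sup>*\<close> follow because an
  endomorphism of \<open>X\<close> is determined by its composites with \<open>\<phi>\<close> and \<open>\<gamma>\<close>.\<close>

locale additive_inv_cat =
  fixes C :: "('o, 'm) icat"
  assumes additive_inv_cat: "is_additive_inv_cat C"
begin

abbreviation comp (infixl "\<cdot>" 70) where "f \<cdot> g \<equiv> cmp C f g"
abbreviation add (infixl "\<oplus>" 65) where "f \<oplus> g \<equiv> addm C f g"

lemma category: "is_category C" and preadditive: "is_preadditive C"
  using additive_inv_cat unfolding is_additive_inv_cat_def is_additive_def is_preadditive_def
  by auto

lemma hom_objs: "f \<in> Hom C A B \<Longrightarrow> A \<in> Obj C \<and> B \<in> Obj C"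
  using category unfolding is_category_def by (metis empty_iff)

lemma comp_hom [intro]: "f \<in> Hom C A B \<Longrightarrow> g \<in> Hom C B D \<Longrightarrow> f \<cdot> g \<in> Hom C A D"
  and comp_assoc:
    "f \<in> Hom C A B \<Longrightarrow> g \<in> Hom C B D \<Longrightarrow> h \<in> Hom C D E \<Longrightarrow> f \<cdot> g \<cdot> h = f \<cdot> (g \<cdot> h)"
  and id_hom [intro]: "A \<in> Obj C \<Longrightarrow> idm C A \<in> Hom C A A"
  and id_left: "f \<in> Hom C A B \<Longrightarrow> idm C A \<cdot> f = f"
  and id_right: "f \<in> Hom C A B \<Longrightarrow> f \<cdot> idm C B = f"
  using category unfolding is_category_def by blast+

lemma zero_hom [intro]: "A \<in> Obj C \<Longrightarrow> B \<in> Obj C \<Longrightarrow> zer C A B \<in> Hom C A B"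
  and add_hom [intro]: "f \<in> Hom C A B \<Longrightarrow> g \<in> Hom C A B \<Longrightarrow> f \<oplus> g \<in> Hom C A B"
  and neg_hom [intro]: "f \<in> Hom C A B \<Longrightarrow> negm C f \<in> Hom C A B"
  and add_assoc:
    "f \<in> Hom C A B \<Longrightarrow> g \<in> Hom C A B \<Longrightarrow> h \<in> Hom C A B \<Longrightarrow> f \<oplus> g \<oplus> h = f \<oplus> (g \<oplus> h)"
  and add_commute: "f \<in> Hom C A B \<Longrightarrow> g \<in> Hom C A B \<Longrightarrow> f \<oplus> g = g \<oplus> f"
  and add_zero_right: "f \<in> Hom C A B \<Longrightarrow> f \<oplus> zer C A B = f"
  and add_neg_right: "f \<in> Hom C A B \<Longrightarrow> f \<oplus> negm C f = zer C A B"
  and comp_add_right: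
    "f \<in> Hom C A B \<Longrightarrow> g \<in> Hom C B D \<Longrightarrow> h \<in> Hom C B D \<Longrightarrow> f \<cdot> (g \<oplus> h) = f \<cdot> g \<oplus> f \<cdot> h"
  and comp_add_left:
    "f \<in> Hom C A B \<Longrightarrow> g \<in> Hom C A B \<Longrightarrow> h \<in> Hom C B D \<Longrightarrow> (f \<oplus> g) \<cdot> h = f \<cdot> h \<oplus> g \<cdot> h"
  using preadditive unfolding is_preadditive_def by meson+

lemma star_hom [intro]: "f \<in> Hom C A B \<Longrightarrow> star C f \<in> Hom C B A"
  and star_star: "f \<in> Hom C A B \<Longrightarrow> star C (star C f) = f"
  and star_comp: "f \<in> Hom C A B \<Longrightarrow> g \<in> Hom C B D \<Longrightarrow> star C (f \<cdot> g) = star C g \<cdot> star C f"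
  and star_add: "f \<in> Hom C A B \<Longrightarrow> g \<in> Hom C A B \<Longrightarrow> star C (f \<oplus> g) = star C f \<oplus> star C g"
  using additive_inv_cat unfolding is_additive_inv_cat_def by meson+

lemma add_zero_left:
  assumes "f \<in> Hom C A B"
  shows "zer C A B \<oplus> f = f"
proof -
  have "zer C A B \<in> Hom C A B"
    using assms hom_objs by blast
  then show ?thesis
    using add_commute[OF _ assms] add_zero_right[OF assms] by simp
qed

lemma add_neg_cancel_left:
  assumes "f \<in> Hom C A B" "g \<in> Hom C A B"
  shows "f \<oplus> (g \<oplus> negm C f) = g"
proof -
  have "f \<oplus> (g \<oplus> negm C f) = f \<oplus> (negm C f \<oplus> g)"
    using assms add_commute[of g A B "negm C f"] by (simp add: neg_hom)
  also have "\<dots> = (f \<oplus> negm C f) \<oplus> g"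
    using assms add_assoc[of f A B "negm C f" g] by (simp add: neg_hom)
  finally show ?thesis
    using add_neg_right[OF assms(1)] add_zero_left[OF assms(2)] by simp
qed

lemma neg_add_cancel_left:
  assumes "f \<in> Hom C A B" "g \<in> Hom C A B"
  shows "negm C f \<oplus> (f \<oplus> g) = g"
proof -
  have "negm C f \<oplus> (f \<oplus> g) = (negm C f \<oplus> f) \<oplus> g"
    using assms by (simp add: add_assoc[of "negm C f" A B] neg_hom)
  also have "\<dots> = (f \<oplus> negm C f) \<oplus> g"
    using assms add_commute[of f A B "negm C f"] by (simp add: neg_hom)
  finally show ?thesis
    using add_neg_right[OF assms(1)] add_zero_left[OF assms(2)] by simp
qed

lemma add_left_cancel:
  assumes "f \<in> Hom C A B" "g \<in> Hom C A B" "h \<in> Hom C A B" and "f \<oplus> g = f \<oplus> h"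
  shows "g = h"
proof -
  have "g = negm C f \<oplus> (f \<oplus> g)"
    using neg_add_cancel_left[OF assms(1,2)] by simp
  also have "\<dots> = h"
    using neg_add_cancel_left[OF assms(1,3)] assms(4) by simp
  finally show ?thesis .
qed

lemma eq_iff_add_neg_eq_zero:
  assumes "f \<in> Hom C A B" "g \<in> Hom C A B"
  shows "f = g \<longleftrightarrow> f \<oplus> negm C g = zer C A B"
proof
  show "f \<oplus> negm C g = zer C A B" if "f = g"
    using that add_neg_right[OF assms(2)] by simp
  show "f = g" if "f \<oplus> negm C g = zer C A B"
    using that add_neg_cancel_left[OF assms(2,1)] add_zero_right[OF assms(2)] by simp
qed

lemma comp_zero_right:
  assumes "f \<in> Hom C A B" "D \<in> Obj C"
  shows "f \<cdot> zer C B D = zer C A D"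
proof -
  have z: "zer C B D \<in> Hom C B D" "zer C A D \<in> Hom C A D" "f \<cdot> zer C B D \<in> Hom C A D"
    using assms hom_objs by blast+
  have "f \<cdot> zer C B D \<oplus> f \<cdot> zer C B D = f \<cdot> zer C B D \<oplus> zer C A D"
    using comp_add_right[OF assms(1) z(1) z(1)] z by (simp add: add_zero_right)
  then show ?thesis
    using add_left_cancel[OF z(3) z(3) z(2)] by simp
qed

lemma comp_zero_left:
  assumes "f \<in> Hom C B D" "A \<in> Obj C"
  shows "zer C A B \<cdot> f = zer C A D"
proof -
  have z: "zer C A B \<in> Hom C A B" "zer C A D \<in> Hom C A D" "zer C A B \<cdot> f \<in> Hom C A D"
    using assms hom_objs by blast+
  have "zer C A B \<cdot> f \<oplus> zer C A B \<cdot> f = zer C A B \<cdot> f \<oplus> zer C A D"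
    using comp_add_left[OF z(1) z(1) assms(1)] z by (simp add: add_zero_right)
  then show ?thesis
    using add_left_cancel[OF z(3) z(3) z(2)] by simp
qed

lemma comp_neg_left:
  assumes "f \<in> Hom C A B" "g \<in> Hom C B D"
  shows "negm C f \<cdot> g = negm C (f \<cdot> g)"
proof -
  have n: "negm C f \<in> Hom C A B" and fg: "f \<cdot> g \<in> Hom C A D" and A: "A \<in> Obj C"
    using assms hom_objs by blast+
  have "f \<cdot> g \<oplus> negm C f \<cdot> g = (f \<oplus> negm C f) \<cdot> g"
    using comp_add_left[OF assms(1) n assms(2)] by simp
  also have "\<dots> = f \<cdot> g \<oplus> negm C (f \<cdot> g)"
    using add_neg_right[OF assms(1)] comp_zero_left[OF assms(2) A] add_neg_right[OF fg] by simp
  finally show ?thesis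
    using add_left_cancel[OF fg comp_hom[OF n assms(2)] neg_hom[OF fg]] by simp
qed

lemma comp_neg_right:
  assumes "f \<in> Hom C A B" "g \<in> Hom C B D"
  shows "f \<cdot> negm C g = negm C (f \<cdot> g)"
proof -
  have n: "negm C g \<in> Hom C B D" and fg: "f \<cdot> g \<in> Hom C A D" and D: "D \<in> Obj C"
    using assms hom_objs by blast+
  have "f \<cdot> g \<oplus> f \<cdot> negm C g = f \<cdot> (g \<oplus> negm C g)"
    using comp_add_right[OF assms(1) assms(2) n] by simp
  also have "\<dots> = f \<cdot> g \<oplus> negm C (f \<cdot> g)"
    using add_neg_right[OF assms(2)] comp_zero_right[OF assms(1) D] add_neg_right[OF fg] by simp
  finally show ?thesis
    using add_left_cancel[OF fg comp_hom[OF assms(1) n] neg_hom[OF fg]] by simp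
qed

lemma star_zero:
  assumes "A \<in> Obj C" "B \<in> Obj C"
  shows "star C (zer C A B) = zer C B A"
proof -
  have z: "zer C A B \<in> Hom C A B" "zer C B A \<in> Hom C B A" and s: "star C (zer C A B) \<in> Hom C B A"
    using assms by blast+
  have "star C (zer C A B) \<oplus> star C (zer C A B) = star C (zer C A B) \<oplus> zer C B A"
    using star_add[OF z(1) z(1)] add_zero_right[OF z(1)] add_zero_right[OF s] by simp
  then show ?thesis
    using add_left_cancel[OF s s z(2)] by simp
qed

lemma star_id:
  assumes "A \<in> Obj C"
  shows "star C (idm C A) = idm C A"
proof -
  have i: "idm C A \<in> Hom C A A" and s: "star C (idm C A) \<in> Hom C A A"
    using assms by blast+
  have "star C (idm C A) = star C (star C (idm C A)) \<cdot> star C (idm C A)"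
    using id_left[OF s] star_star[OF i] by simp
  also have "\<dots> = star C (idm C A \<cdot> star C (idm C A))"
    using star_comp[OF i s] by simp
  also have "\<dots> = idm C A"
    using id_left[OF s] star_star[OF i] by simp
  finally show ?thesis .
qed

lemma star_eq_if_star_comp_eq:
  assumes "q \<in> Hom C A A" and "star C q \<cdot> q = star C q"
  shows "star C q = q"
proof -
  have "star C q = star C (star C q \<cdot> q)"
    using star_comp[OF star_hom[OF assms(1)] assms(1)] star_star[OF assms(1)] assms(2) by simp
  then show ?thesis
    using assms(2) star_star[OF assms(1)] by simp
qed

lemma inverse_unique:
  assumes "is_inverse C A B f g" "is_inverse C A B f g'"
  shows "g = g'"
proof -
  have h: "f \<in> Hom C A B" "g \<in> Hom C B A" "g' \<in> Hom C B A"
    "f \<cdot> g' = idm C A" "g \<cdot> f = idm C B"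
    using assms unfolding is_inverse_def by auto
  have "g = g \<cdot> (f \<cdot> g')"
    using h id_right by simp
  also have "\<dots> = g'"
    using comp_assoc[OF h(2) h(1) h(3)] h id_left by simp
  finally show ?thesis .
qed

lemma is_inverse_minv: "invertible C A B f \<Longrightarrow> is_inverse C A B f (minv C A B f)"
  unfolding invertible_def minv_def using inverse_unique by (metis theI)

end

locale endo_with_kernel = additive_inv_cat +
  fixes X K and \<phi> \<kappa>
  assumes obj_X: "X \<in> Obj C" and endo: "\<phi> \<in> Hom C X X"
    and kernel: "is_kernel C X X \<phi> K \<kappa>"
begin

lemma kernel_hom: "\<kappa> \<in> Hom C K X" and kernel_comp: "\<kappa> \<cdot> \<phi> = zer C K X"
  using kernel unfolding is_kernel_def by auto

lemma obj_K: "K \<in> Obj C"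
  using kernel_hom hom_objs by blast

lemma kernel_factor:
  assumes "d \<in> Hom C M X" "d \<cdot> \<phi> = zer C M X"
  obtains t where "t \<in> Hom C M K" "d = t \<cdot> \<kappa>"
  using kernel assms unfolding is_kernel_def by blast

lemma kernel_cancel:
  assumes "f \<in> Hom C M K" "g \<in> Hom C M K" "f \<cdot> \<kappa> = g \<cdot> \<kappa>"
  shows "f = g"
proof -
  have "f \<cdot> \<kappa> \<cdot> \<phi> = zer C M X"
    using comp_assoc[OF assms(1) kernel_hom endo] kernel_comp comp_zero_right[OF assms(1) obj_X]
    by simp
  with assms kernel_hom show ?thesis
    using kernel unfolding is_kernel_def by blast
qed

text \<open>All morphisms below live between \<open>X\<close> and \<open>K\<close>; instantiating the object
  parameters of the laws lets the simplifier discharge their typing premises.\<close>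

lemmas laws2 = add_hom neg_hom star_hom add_zero_right add_zero_left add_neg_right star_star
  star_add id_left id_right add_neg_cancel_left
lemmas laws3 = comp_hom comp_add_right comp_add_left star_comp comp_neg_left comp_neg_right
  comp_zero_left comp_zero_right

lemmas laws2_A = laws2[where A = X] laws2[where A = K]
lemmas laws2_AB = laws2_A[where B = X] laws2_A[where B = K]
lemmas laws3_A = laws3[where A = X] laws3[where A = K]
lemmas laws3_AB = laws3_A[where B = X] laws3_A[where B = K]
lemmas laws3_ABD = laws3_AB[where D = X] laws3_AB[where D = K]
lemmas assoc_A = comp_assoc[where A = X] comp_assoc[where A = K]
lemmas assoc_AB = assoc_A[where B = X] assoc_A[where B = K]
lemmas assoc_ABD = assoc_AB[where D = X] assoc_AB[where D = K]
lemmas assoc_ABDE = assoc_ABD[where E = X] assoc_ABD[where E = K]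

lemmas typed_simps = laws2_AB laws3_ABD assoc_ABDE id_hom zero_hom star_zero star_id
  obj_X obj_K endo kernel_hom

lemma comp_eq_extend:
  assumes "f \<cdot> g = h" "f \<in> Hom C A B" "g \<in> Hom C B D"
  shows "z \<in> Hom C D X \<Longrightarrow> f \<cdot> (g \<cdot> z) = h \<cdot> z" and "z \<in> Hom C D K \<Longrightarrow> f \<cdot> (g \<cdot> z) = h \<cdot> z"
  using assms comp_assoc[OF assms(2,3)] by metis+

lemma comp3_eq_extend:
  assumes "f \<cdot> (g \<cdot> h) = r" "f \<in> Hom C A B" "g \<in> Hom C B D" "h \<in> Hom C D E"
  shows "z \<in> Hom C E X \<Longrightarrow> f \<cdot> (g \<cdot> (h \<cdot> z)) = r \<cdot> z"
    and "z \<in> Hom C E K \<Longrightarrow> f \<cdot> (g \<cdot> (h \<cdot> z)) = r \<cdot> z"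
  using assms comp_assoc[OF assms(3,4)] comp_assoc[OF assms(2) comp_hom[OF assms(3,4)]] by metis+


definition is_kernel_retraction where
  "is_kernel_retraction \<gamma> \<longleftrightarrow>
     \<gamma> \<in> Hom C X K \<and> \<kappa> \<cdot> \<gamma> = idm C K \<and> \<phi> \<cdot> \<gamma> = zer C X K"

lemma kernel_retraction_ext:
  assumes "is_kernel_retraction \<gamma>" "d \<in> Hom C X X" "e \<in> Hom C X X"
    and "d \<cdot> \<phi> = e \<cdot> \<phi>" "d \<cdot> \<gamma> = e \<cdot> \<gamma>"
  shows "d = e"
proof -
  have \<gamma>: "\<gamma> \<in> Hom C X K" "\<kappa> \<cdot> \<gamma> = idm C K"
    using assms(1) unfolding is_kernel_retraction_def by auto
  define f where "f = d \<oplus> negm C e"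
  have f: "f \<in> Hom C X X" "f \<cdot> \<phi> = zer C X X"
    unfolding f_def using assms by (simp_all add: typed_simps)
  then obtain t where t: "t \<in> Hom C X K" "f = t \<cdot> \<kappa>"
    by (rule kernel_factor)
  have "t = f \<cdot> \<gamma>"
    using t \<gamma> by (simp add: typed_simps)
  also have "\<dots> = zer C X K"
    unfolding f_def using assms \<gamma> by (simp add: typed_simps)
  finally have "f = zer C X X"
    using t by (simp add: typed_simps)
  then show ?thesis
    unfolding f_def using assms eq_iff_add_neg_eq_zero by blast
qed

lemma kernel_retraction_complement:
  assumes "is_kernel_retraction \<gamma>" "y \<in> Hom C X X" "y \<cdot> (\<phi> \<cdot> \<phi>) = \<phi>"
  shows "y \<cdot> \<phi> \<oplus> \<gamma> \<cdot> \<kappa> = idm C X"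
proof (rule kernel_retraction_ext[OF assms(1)])
  have \<gamma>: "\<gamma> \<in> Hom C X K" "\<kappa> \<cdot> \<gamma> = idm C K" "\<phi> \<cdot> \<gamma> = zer C X K"
    using assms(1) unfolding is_kernel_retraction_def by auto
  show "y \<cdot> \<phi> \<oplus> \<gamma> \<cdot> \<kappa> \<in> Hom C X X" "idm C X \<in> Hom C X X"
    using assms \<gamma> by (simp_all add: typed_simps)
  show "(y \<cdot> \<phi> \<oplus> \<gamma> \<cdot> \<kappa>) \<cdot> \<phi> = idm C X \<cdot> \<phi>"
    using assms \<gamma> by (simp add: typed_simps kernel_comp)
  show "(y \<cdot> \<phi> \<oplus> \<gamma> \<cdot> \<kappa>) \<cdot> \<gamma> = idm C X \<cdot> \<gamma>"
    using assms \<gamma> comp_eq_extend(2)[OF \<gamma>(2) kernel_hom \<gamma>(1)] by (simp add: typed_simps)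
qed

lemma cokernel_of_kernel_retraction:
  assumes "is_kernel_retraction \<gamma>" "y \<in> Hom C X X" "y \<cdot> (\<phi> \<cdot> \<phi>) = \<phi>"
  shows "is_cokernel C X X \<phi> K \<gamma>"
  unfolding is_cokernel_def
proof (intro conjI allI impI)
  have \<gamma>: "\<gamma> \<in> Hom C X K" "\<kappa> \<cdot> \<gamma> = idm C K" "\<phi> \<cdot> \<gamma> = zer C X K"
    using assms(1) unfolding is_kernel_retraction_def by auto
  show "\<gamma> \<in> Hom C X K" "\<phi> \<cdot> \<gamma> = zer C X K"
    using \<gamma> by auto
  fix M \<beta> assume "\<beta> \<in> Hom C X M \<and> \<phi> \<cdot> \<beta> = zer C X M"
  then have \<beta>: "\<beta> \<in> Hom C X M" "\<phi> \<cdot> \<beta> = zer C X M" by auto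
  have "\<beta> = (y \<cdot> \<phi> \<oplus> \<gamma> \<cdot> \<kappa>) \<cdot> \<beta>"
    using kernel_retraction_complement[OF assms] \<beta> id_left by simp
  also have "\<dots> = y \<cdot> (\<phi> \<cdot> \<beta>) \<oplus> \<gamma> \<cdot> (\<kappa> \<cdot> \<beta>)"
    using comp_add_left[OF comp_hom[OF assms(2) endo] comp_hom[OF \<gamma>(1) kernel_hom] \<beta>(1)]
      comp_assoc[OF assms(2) endo \<beta>(1)] comp_assoc[OF \<gamma>(1) kernel_hom \<beta>(1)] by simp
  also have "\<dots> = \<gamma> \<cdot> (\<kappa> \<cdot> \<beta>)"
    using \<beta> hom_objs comp_zero_right[OF assms(2)]
      add_zero_left[OF comp_hom[OF \<gamma>(1) comp_hom[OF kernel_hom]]]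
    by simp
  finally have factor: "\<beta> = \<gamma> \<cdot> (\<kappa> \<cdot> \<beta>)" .
  show "\<exists>!\<beta>'. \<beta>' \<in> Hom C K M \<and> \<beta> = \<gamma> \<cdot> \<beta>'"
  proof (rule ex1I)
    show "\<kappa> \<cdot> \<beta> \<in> Hom C K M \<and> \<beta> = \<gamma> \<cdot> (\<kappa> \<cdot> \<beta>)"
      using factor \<beta> kernel_hom by blast
    fix \<beta>' assume "\<beta>' \<in> Hom C K M \<and> \<beta> = \<gamma> \<cdot> \<beta>'"
    then show "\<beta>' = \<kappa> \<cdot> \<beta>"
      using comp_assoc[OF kernel_hom \<gamma>(1), of \<beta>' M] \<gamma>(2) id_left[of \<beta>' K M] by simp
  qed
qed

lemma retraction_of_cokernel:
  assumes "is_cokernel C X X \<phi> L lm" "invertible C K L (\<kappa> \<cdot> lm)"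
  shows "is_kernel_retraction (lm \<cdot> minv C K L (\<kappa> \<cdot> lm))"
proof -
  have lm: "lm \<in> Hom C X L" "\<phi> \<cdot> lm = zer C X L"
    using assms(1) unfolding is_cokernel_def by auto
  have m: "minv C K L (\<kappa> \<cdot> lm) \<in> Hom C L K" "\<kappa> \<cdot> lm \<cdot> minv C K L (\<kappa> \<cdot> lm) = idm C K"
    using is_inverse_minv[OF assms(2)] unfolding is_inverse_def by auto
  have "\<kappa> \<cdot> (lm \<cdot> minv C K L (\<kappa> \<cdot> lm)) = idm C K"
    using comp_assoc[OF kernel_hom lm(1) m(1)] m(2) by simp
  moreover have "\<phi> \<cdot> (lm \<cdot> minv C K L (\<kappa> \<cdot> lm)) = zer C X K"
    using comp_assoc[OF endo lm(1) m(1)] lm(2) comp_zero_left[OF m(1) obj_X] by simp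
  ultimately show ?thesis
    unfolding is_kernel_retraction_def using lm(1) m(1) by blast
qed

lemma core_inverseD:
  assumes "is_core_inverse C X \<phi> \<chi>"
  shows "\<chi> \<in> Hom C X X" "star C (\<phi> \<cdot> \<chi>) = \<phi> \<cdot> \<chi>" "\<phi> \<cdot> (\<chi> \<cdot> \<chi>) = \<chi>"
    "\<chi> \<cdot> (\<phi> \<cdot> \<phi>) = \<phi>" "\<phi> \<cdot> (\<chi> \<cdot> \<phi>) = \<phi>" "\<chi> \<cdot> (\<phi> \<cdot> \<chi>) = \<chi>"
    "star C \<phi> \<cdot> (\<phi> \<cdot> \<chi>) = star C \<phi>" "\<kappa> \<cdot> \<chi> = zer C K X"
    "star C \<chi> \<cdot> star C \<phi> = \<phi> \<cdot> \<chi>"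
proof -
  have \<chi>: "\<chi> \<in> Hom C X X" and herm: "star C (\<phi> \<cdot> \<chi>) = \<phi> \<cdot> \<chi>"
    and right: "\<phi> \<cdot> (\<chi> \<cdot> \<chi>) = \<chi>" and left: "\<chi> \<cdot> (\<phi> \<cdot> \<phi>) = \<phi>"
    using assms unfolding is_core_inverse_def by auto
  show "\<chi> \<in> Hom C X X" "star C (\<phi> \<cdot> \<chi>) = \<phi> \<cdot> \<chi>" "\<phi> \<cdot> (\<chi> \<cdot> \<chi>) = \<chi>"
    "\<chi> \<cdot> (\<phi> \<cdot> \<phi>) = \<phi>" by fact+
  show "star C \<chi> \<cdot> star C \<phi> = \<phi> \<cdot> \<chi>"
    using herm \<chi> by (simp add: typed_simps)
  have "\<phi> \<cdot> (\<chi> \<cdot> \<phi>) = (\<phi> \<cdot> (\<chi> \<cdot> \<chi>)) \<cdot> (\<phi> \<cdot> \<phi>)"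
    using \<chi> left by (simp add: typed_simps)
  then show \<phi>\<chi>\<phi>: "\<phi> \<cdot> (\<chi> \<cdot> \<phi>) = \<phi>"
    using right left by simp
  have "\<chi> \<cdot> (\<phi> \<cdot> \<chi>) = (\<chi> \<cdot> (\<phi> \<cdot> \<phi>)) \<cdot> (\<chi> \<cdot> \<chi>)"
    using \<chi> right[symmetric] by (simp add: typed_simps)
  then show "\<chi> \<cdot> (\<phi> \<cdot> \<chi>) = \<chi>"
    using right left by simp
  have "star C \<phi> = star C (\<phi> \<cdot> \<chi> \<cdot> \<phi>)"
    using \<phi>\<chi>\<phi> \<chi> by (simp add: typed_simps)
  then show "star C \<phi> \<cdot> (\<phi> \<cdot> \<chi>) = star C \<phi>"
    using herm \<chi> by (simp add: typed_simps)
  have "\<kappa> \<cdot> \<chi> = \<kappa> \<cdot> \<phi> \<cdot> (\<chi> \<cdot> \<chi>)"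
    using right \<chi> by (simp add: typed_simps)
  then show "\<kappa> \<cdot> \<chi> = zer C K X"
    using \<chi> by (simp add: typed_simps kernel_comp)
qed

lemma core_inverse_kernel_retraction:
  assumes "is_core_inverse C X \<phi> \<chi>"
  obtains \<gamma> where "is_kernel_retraction \<gamma>" "\<chi> \<cdot> \<phi> \<oplus> \<gamma> \<cdot> \<kappa> = idm C X"
proof -
  note \<chi> = core_inverseD[OF assms]
  define d where "d = idm C X \<oplus> negm C (\<chi> \<cdot> \<phi>)"
  have "d \<in> Hom C X X" "d \<cdot> \<phi> = zer C X X"
    unfolding d_def using \<chi> by (simp_all add: typed_simps)
  then obtain \<gamma> where \<gamma>: "\<gamma> \<in> Hom C X K" "d = \<gamma> \<cdot> \<kappa>"
    by (rule kernel_factor)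
  have split: "\<chi> \<cdot> \<phi> \<oplus> \<gamma> \<cdot> \<kappa> = idm C X"
    unfolding \<gamma>(2)[symmetric] d_def using \<chi>(1) by (simp add: typed_simps)
  have "\<kappa> \<cdot> (\<chi> \<cdot> \<phi> \<oplus> \<gamma> \<cdot> \<kappa>) = \<kappa>"
    using split by (simp add: typed_simps)
  then have "(\<kappa> \<cdot> \<gamma>) \<cdot> \<kappa> = idm C K \<cdot> \<kappa>"
    using \<gamma> \<chi> comp_eq_extend(1)[OF \<chi>(8) kernel_hom \<chi>(1)] by (simp add: typed_simps)
  then have \<kappa>\<gamma>: "\<kappa> \<cdot> \<gamma> = idm C K"
    by (rule kernel_cancel[where M = K, rotated 2]) (use \<gamma> in \<open>simp_all add: typed_simps\<close>)
  have "\<phi> \<oplus> \<phi> \<cdot> (\<gamma> \<cdot> \<kappa>) = \<phi> \<cdot> (\<chi> \<cdot> \<phi> \<oplus> \<gamma> \<cdot> \<kappa>)"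
    using comp_add_right[OF endo comp_hom[OF \<chi>(1) endo] comp_hom[OF \<gamma>(1) kernel_hom]] \<chi>(5)
    by simp
  also have "\<dots> = \<phi> \<oplus> zer C X X"
    using split id_right[OF endo] add_zero_right[OF endo] by simp
  finally have "\<phi> \<cdot> (\<gamma> \<cdot> \<kappa>) = zer C X X"
    using add_left_cancel[OF endo comp_hom[OF endo comp_hom[OF \<gamma>(1) kernel_hom]]] obj_X by blast
  then have "(\<phi> \<cdot> \<gamma>) \<cdot> \<kappa> = zer C X K \<cdot> \<kappa>"
    using comp_assoc[OF endo \<gamma>(1) kernel_hom] comp_zero_left[OF kernel_hom obj_X] by simp
  then have \<phi>\<gamma>: "\<phi> \<cdot> \<gamma> = zer C X K"
    by (rule kernel_cancel[where M = X, rotated 2]) (use \<gamma> in \<open>simp_all add: typed_simps\<close>)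
  show ?thesis
    using that \<gamma>(1) \<kappa>\<gamma> \<phi>\<gamma> split unfolding is_kernel_retraction_def by blast
qed

lemma core_inverse_unique:
  assumes "is_core_inverse C X \<phi> \<chi>" "is_core_inverse C X \<phi> \<chi>'"
  shows "\<chi> = \<chi>'"
proof -
  note \<chi> = core_inverseD[OF assms(1)] and \<chi>' = core_inverseD[OF assms(2)]
  obtain \<gamma> where \<gamma>: "is_kernel_retraction \<gamma>" "\<chi> \<cdot> \<phi> \<oplus> \<gamma> \<cdot> \<kappa> = idm C X"
    using core_inverse_kernel_retraction[OF assms(1)] .
  have \<gamma>\<kappa>: "\<gamma> \<cdot> \<kappa> \<in> Hom C X X"
    using \<gamma>(1) kernel_hom unfolding is_kernel_retraction_def by blast
  have "\<gamma> \<cdot> \<kappa> \<oplus> \<chi> \<cdot> \<phi> = \<gamma> \<cdot> \<kappa> \<oplus> \<chi>' \<cdot> \<phi>"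
    using \<gamma>(2) kernel_retraction_complement[OF \<gamma>(1) \<chi>'(1,4)]
      add_commute[OF \<gamma>\<kappa> comp_hom[OF \<chi>(1) endo]] add_commute[OF \<gamma>\<kappa> comp_hom[OF \<chi>'(1) endo]]
    by simp
  then have \<chi>\<phi>: "\<chi> \<cdot> \<phi> = \<chi>' \<cdot> \<phi>"
    using add_left_cancel[OF \<gamma>\<kappa> comp_hom[OF \<chi>(1) endo] comp_hom[OF \<chi>'(1) endo]] by blast
  txt \<open>The projections \<open>\<phi>\<chi>\<close> and \<open>\<phi>\<chi>'\<close> are hermitian and absorb each other.\<close>
  have absorb: "\<phi> \<cdot> \<chi>' \<cdot> (\<phi> \<cdot> \<chi>) = \<phi> \<cdot> \<chi>" "\<phi> \<cdot> \<chi> \<cdot> (\<phi> \<cdot> \<chi>') = \<phi> \<cdot> \<chi>'"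
    using comp3_eq_extend(1)[OF \<chi>'(5) endo \<chi>'(1) endo]
      comp3_eq_extend(1)[OF \<chi>(5) endo \<chi>(1) endo] \<chi>(1) \<chi>'(1)
    by (simp_all add: typed_simps)
  have "\<phi> \<cdot> \<chi> = star C (\<phi> \<cdot> \<chi>' \<cdot> (\<phi> \<cdot> \<chi>))"
    using absorb(1) \<chi>(2) by simp
  also have "\<dots> = \<phi> \<cdot> \<chi> \<cdot> (\<phi> \<cdot> \<chi>')"
    using star_comp[OF comp_hom[OF endo \<chi>'(1)] comp_hom[OF endo \<chi>(1)]] \<chi>(2) \<chi>'(2) by simp
  finally have \<phi>\<chi>: "\<phi> \<cdot> \<chi> = \<phi> \<cdot> \<chi>'"
    using absorb(2) by simp
  have "\<chi> = \<chi>' \<cdot> (\<phi> \<cdot> \<chi>')"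
    using \<chi>(6) \<chi>\<phi> \<phi>\<chi> comp_assoc[OF \<chi>(1) endo \<chi>(1)] comp_assoc[OF \<chi>'(1) endo \<chi>(1)] by simp
  then show ?thesis
    using \<chi>'(6) by simp
qed

abbreviation gram where "gram \<equiv> star C \<phi> \<cdot> (\<phi> \<cdot> (\<phi> \<cdot> \<phi>)) \<oplus> star C \<kappa> \<cdot> \<kappa>"

lemma kernel_retraction_star:
  assumes "is_kernel_retraction \<gamma>"
  shows "star C \<gamma> \<cdot> star C \<kappa> = idm C K" "star C \<gamma> \<cdot> star C \<phi> = zer C K X"
proof -
  have \<gamma>: "\<gamma> \<in> Hom C X K" "\<kappa> \<cdot> \<gamma> = idm C K" "\<phi> \<cdot> \<gamma> = zer C X K"
    using assms unfolding is_kernel_retraction_def by auto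
  show "star C \<gamma> \<cdot> star C \<kappa> = idm C K"
    using star_comp[OF kernel_hom \<gamma>(1)] \<gamma>(2) star_id[OF obj_K] by simp
  show "star C \<gamma> \<cdot> star C \<phi> = zer C K X"
    using star_comp[OF endo \<gamma>(1)] \<gamma>(3) star_zero[OF obj_X obj_K] by simp
qed

lemma core_inverse_gram_inverse:
  assumes "is_core_inverse C X \<phi> \<chi>" "is_kernel_retraction \<gamma>"
  shows "is_inverse C X X gram (\<chi> \<cdot> (\<chi> \<cdot> (\<chi> \<cdot> star C \<chi>)) \<oplus> \<gamma> \<cdot> star C \<gamma>)"
proof -
  note \<chi> = core_inverseD[OF assms(1)]
  have \<gamma>: "\<gamma> \<in> Hom C X K" "\<kappa> \<cdot> \<gamma> = idm C K" "\<phi> \<cdot> \<gamma> = zer C X K"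
    using assms(2) unfolding is_kernel_retraction_def by auto
  note \<gamma>' = kernel_retraction_star[OF assms(2)]
  have split: "\<chi> \<cdot> \<phi> \<oplus> \<gamma> \<cdot> \<kappa> = idm C X"
    using kernel_retraction_complement[OF assms(2) \<chi>(1,4)] .
  have split': "star C \<phi> \<cdot> star C \<chi> \<oplus> star C \<kappa> \<cdot> star C \<gamma> = idm C X"
    using arg_cong[OF split, of "star C"] \<chi>(1) \<gamma>(1) by (simp add: typed_simps)
  have star_\<chi>\<kappa>: "star C \<chi> \<cdot> star C \<kappa> = zer C X K"
    using arg_cong[OF \<chi>(8), of "star C"] \<chi>(1) by (simp add: typed_simps)
  txt \<open>In both products the cross terms vanish because \<open>\<kappa>\<chi> = 0\<close> and \<open>\<phi>\<gamma> = 0\<close>.\<close>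
  have "gram \<cdot> (\<chi> \<cdot> (\<chi> \<cdot> (\<chi> \<cdot> star C \<chi>)) \<oplus> \<gamma> \<cdot> star C \<gamma>) = idm C X"
    using \<chi>(1) \<gamma>(1) split' \<chi>(3) \<gamma>(2,3) \<chi>(8) \<chi>(7)
      comp3_eq_extend[OF \<chi>(3) endo \<chi>(1) \<chi>(1)]
      comp3_eq_extend[OF \<chi>(7) star_hom[OF endo] endo \<chi>(1)]
      comp_eq_extend[OF \<gamma>(3) endo \<gamma>(1)] comp_eq_extend[OF \<gamma>(2) kernel_hom \<gamma>(1)]
      comp_eq_extend[OF \<chi>(8) kernel_hom \<chi>(1)]
    by (simp add: typed_simps)
  moreover have "(\<chi> \<cdot> (\<chi> \<cdot> (\<chi> \<cdot> star C \<chi>)) \<oplus> \<gamma> \<cdot> star C \<gamma>) \<cdot> gram = idm C X"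
    using \<chi>(1) \<gamma>(1) split \<chi>(4,9) \<gamma>' star_\<chi>\<kappa>
      comp3_eq_extend[OF \<chi>(4) \<chi>(1) endo endo]
      comp_eq_extend[OF \<chi>(9) star_hom[OF \<chi>(1)] star_hom[OF endo]]
      comp_eq_extend[OF star_\<chi>\<kappa> star_hom[OF \<chi>(1)] star_hom[OF kernel_hom]]
      comp_eq_extend[OF \<gamma>'(1) star_hom[OF \<gamma>(1)] star_hom[OF kernel_hom]]
      comp_eq_extend[OF \<gamma>'(2) star_hom[OF \<gamma>(1)] star_hom[OF endo]]
    by (simp add: typed_simps)
  ultimately show ?thesis
    unfolding is_inverse_def using \<chi>(1) \<gamma>(1) by (simp add: typed_simps)
qed

lemma gram_inverse_splits:
  assumes "is_kernel_retraction \<gamma>" "is_inverse C X X gram w"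
  shows "w \<cdot> (star C \<phi> \<cdot> (\<phi> \<cdot> (\<phi> \<cdot> \<phi>))) \<oplus> \<gamma> \<cdot> \<kappa> = idm C X"
    and "star C \<phi> \<cdot> (\<phi> \<cdot> (\<phi> \<cdot> (\<phi> \<cdot> w))) \<oplus> star C \<kappa> \<cdot> star C \<gamma> = idm C X"
proof -
  have w: "w \<in> Hom C X X" "w \<cdot> gram = idm C X" "gram \<cdot> w = idm C X"
    using assms(2) unfolding is_inverse_def by auto
  have \<gamma>: "\<gamma> \<in> Hom C X K" "\<kappa> \<cdot> \<gamma> = idm C K" "\<phi> \<cdot> \<gamma> = zer C X K"
    using assms(1) unfolding is_kernel_retraction_def by auto
  note \<gamma>' = kernel_retraction_star[OF assms(1)]
  have "\<gamma> = w \<cdot> gram \<cdot> \<gamma>"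
    using w(2) id_left[OF \<gamma>(1)] by simp
  also have "\<dots> = w \<cdot> star C \<kappa>"
    using w(1) \<gamma> comp_eq_extend[OF \<gamma>(3) endo \<gamma>(1)] comp_eq_extend[OF \<gamma>(2) kernel_hom \<gamma>(1)]
    by (simp add: typed_simps)
  finally have w\<kappa>: "w \<cdot> star C \<kappa> = \<gamma>" ..
  have "star C \<gamma> = star C \<gamma> \<cdot> (gram \<cdot> w)"
    using w(3) id_right[OF star_hom[OF \<gamma>(1)]] by simp
  also have "\<dots> = \<kappa> \<cdot> w"
    using w(1) \<gamma> \<gamma>'
      comp_eq_extend[OF \<gamma>'(1) star_hom[OF \<gamma>(1)] star_hom[OF kernel_hom]]
      comp_eq_extend[OF \<gamma>'(2) star_hom[OF \<gamma>(1)] star_hom[OF endo]]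
    by (simp add: typed_simps)
  finally have \<kappa>w: "\<kappa> \<cdot> w = star C \<gamma>" ..
  show "w \<cdot> (star C \<phi> \<cdot> (\<phi> \<cdot> (\<phi> \<cdot> \<phi>))) \<oplus> \<gamma> \<cdot> \<kappa> = idm C X"
    using w \<gamma> comp_eq_extend[OF w\<kappa> w(1) star_hom[OF kernel_hom]] by (simp add: typed_simps)
  show "star C \<phi> \<cdot> (\<phi> \<cdot> (\<phi> \<cdot> (\<phi> \<cdot> w))) \<oplus> star C \<kappa> \<cdot> star C \<gamma> = idm C X"
    using w \<kappa>w by (simp add: typed_simps)
qed

lemma core_inverse_of_gram_inverse:
  assumes "is_kernel_retraction \<gamma>" "is_inverse C X X gram w"
  shows "is_core_inverse C X \<phi> (\<phi> \<cdot> \<phi> \<cdot> (w \<cdot> star C \<phi>))"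
proof -
  define \<chi> where "\<chi> = \<phi> \<cdot> \<phi> \<cdot> (w \<cdot> star C \<phi>)"
  have w: "w \<in> Hom C X X"
    using assms(2) unfolding is_inverse_def by auto
  have \<gamma>: "\<gamma> \<in> Hom C X K" "\<kappa> \<cdot> \<gamma> = idm C K" "\<phi> \<cdot> \<gamma> = zer C X K"
    using assms(1) unfolding is_kernel_retraction_def by auto
  note \<gamma>' = kernel_retraction_star[OF assms(1)]
  note split = gram_inverse_splits[OF assms]
  have \<chi>_hom: "\<chi> \<in> Hom C X X"
    unfolding \<chi>_def using w by (simp add: typed_simps)
  have "star C \<phi> = (star C \<phi> \<cdot> (\<phi> \<cdot> (\<phi> \<cdot> (\<phi> \<cdot> w))) \<oplus> star C \<kappa> \<cdot> star C \<gamma>) \<cdot> star C \<phi>"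
    using split(2) by (simp add: typed_simps)
  also have "\<dots> = star C \<phi> \<cdot> (\<phi> \<cdot> \<chi>)"
    unfolding \<chi>_def using w \<gamma> \<gamma>'(2)
      comp_eq_extend[OF \<gamma>'(2) star_hom[OF \<gamma>(1)] star_hom[OF endo]]
    by (simp add: typed_simps)
  finally have star_\<phi>: "star C \<phi> \<cdot> (\<phi> \<cdot> \<chi>) = star C \<phi>" ..
  have herm: "star C (\<phi> \<cdot> \<chi>) = \<phi> \<cdot> \<chi>"
  proof (rule star_eq_if_star_comp_eq)
    show "\<phi> \<cdot> \<chi> \<in> Hom C X X"
      using \<chi>_hom by (simp add: typed_simps)
    show "star C (\<phi> \<cdot> \<chi>) \<cdot> (\<phi> \<cdot> \<chi>) = star C (\<phi> \<cdot> \<chi>)"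
      using star_\<phi> \<chi>_hom by (simp add: typed_simps)
  qed
  have "\<phi> \<cdot> \<phi> = \<phi> \<cdot> \<phi> \<cdot> (w \<cdot> (star C \<phi> \<cdot> (\<phi> \<cdot> (\<phi> \<cdot> \<phi>))) \<oplus> \<gamma> \<cdot> \<kappa>)"
    using split(1) by (simp add: typed_simps)
  then have \<chi>\<phi>\<phi>\<phi>: "\<chi> \<cdot> (\<phi> \<cdot> (\<phi> \<cdot> \<phi>)) = \<phi> \<cdot> \<phi>"
    unfolding \<chi>_def using w \<gamma> comp_eq_extend[OF \<gamma>(3) endo \<gamma>(1)] by (simp add: typed_simps)
  have left: "\<chi> \<cdot> (\<phi> \<cdot> \<phi>) = \<phi>"
    using kernel_retraction_ext[OF assms(1)] \<chi>_hom \<chi>\<phi>\<phi>\<phi> \<gamma>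
    unfolding \<chi>_def by (simp add: typed_simps comp_eq_extend[OF \<gamma>(3) endo \<gamma>(1)])
  have "\<phi> \<cdot> (\<chi> \<cdot> \<chi>) = \<phi> \<cdot> (\<chi> \<cdot> (\<phi> \<cdot> \<phi>) \<cdot> (w \<cdot> star C \<phi>))"
    unfolding \<chi>_def using w by (simp add: typed_simps)
  then have right: "\<phi> \<cdot> (\<chi> \<cdot> \<chi>) = \<chi>"
    unfolding left unfolding \<chi>_def using w by (simp add: typed_simps)
  show ?thesis
    unfolding is_core_inverse_def \<chi>_def[symmetric] using \<chi>_hom herm left right by blast
qed

lemma core_inv_eq: "is_core_inverse C X \<phi> \<chi> \<Longrightarrow> core_inv C X \<phi> = \<chi>"
  unfolding core_inv_def using core_inverse_unique by blast

lemma has_core_inverse_iff_cokernel: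
  "has_core_inverse C X \<phi> \<longleftrightarrow>
     (\<exists>L lm. is_cokernel C X X \<phi> L lm \<and> invertible C K L (\<kappa> \<cdot> lm) \<and> invertible C X X gram)"
proof
  assume "has_core_inverse C X \<phi>"
  then obtain \<chi> where \<chi>: "is_core_inverse C X \<phi> \<chi>"
    unfolding has_core_inverse_def by blast
  then obtain \<gamma> where \<gamma>: "is_kernel_retraction \<gamma>"
    using core_inverse_kernel_retraction by blast
  have "is_inverse C K K (\<kappa> \<cdot> \<gamma>) (idm C K)"
    using \<gamma> id_hom[OF obj_K] id_left[OF id_hom[OF obj_K]]
    unfolding is_kernel_retraction_def is_inverse_def by simp
  then have "invertible C K K (\<kappa> \<cdot> \<gamma>)"
    unfolding invertible_def by blast
  moreover have "invertible C X X gram"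
    using core_inverse_gram_inverse[OF \<chi> \<gamma>] unfolding invertible_def by blast
  ultimately show "\<exists>L lm. is_cokernel C X X \<phi> L lm \<and> invertible C K L (\<kappa> \<cdot> lm) \<and> invertible C X X gram"
    using cokernel_of_kernel_retraction[OF \<gamma> core_inverseD(1,4)[OF \<chi>]] by blast
next
  assume "\<exists>L lm. is_cokernel C X X \<phi> L lm \<and> invertible C K L (\<kappa> \<cdot> lm) \<and> invertible C X X gram"
  then obtain L lm where "is_cokernel C X X \<phi> L lm" "invertible C K L (\<kappa> \<cdot> lm)" "invertible C X X gram"
    by blast
  then show "has_core_inverse C X \<phi>"
    unfolding has_core_inverse_def
    using core_inverse_of_gram_inverse[OF retraction_of_cokernel is_inverse_minv] by blast
qed

lemma core_inv_of_cokernel: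
  assumes "is_cokernel C X X \<phi> L lm" "invertible C K L (\<kappa> \<cdot> lm)" "invertible C X X gram"
  defines "\<gamma> \<equiv> lm \<cdot> minv C K L (\<kappa> \<cdot> lm)"
  shows "is_cokernel C X X \<phi> K \<gamma>"
    and "core_inv C X \<phi> \<cdot> \<phi> \<oplus> \<gamma> \<cdot> \<kappa> = idm C X"
    and "core_inv C X \<phi> = \<phi> \<cdot> \<phi> \<cdot> (minv C X X gram \<cdot> star C \<phi>)"
proof -
  have \<gamma>: "is_kernel_retraction \<gamma>"
    unfolding \<gamma>_def using retraction_of_cokernel[OF assms(1,2)] .
  have \<chi>: "is_core_inverse C X \<phi> (\<phi> \<cdot> \<phi> \<cdot> (minv C X X gram \<cdot> star C \<phi>))"
    using core_inverse_of_gram_inverse[OF \<gamma> is_inverse_minv[OF assms(3)]] .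
  then show "core_inv C X \<phi> = \<phi> \<cdot> \<phi> \<cdot> (minv C X X gram \<cdot> star C \<phi>)"
    by (rule core_inv_eq)
  then show "core_inv C X \<phi> \<cdot> \<phi> \<oplus> \<gamma> \<cdot> \<kappa> = idm C X"
    using kernel_retraction_complement[OF \<gamma> core_inverseD(1,4)[OF \<chi>]] by simp
  show "is_cokernel C X X \<phi> K \<gamma>"
    using cokernel_of_kernel_retraction[OF \<gamma> core_inverseD(1,4)[OF \<chi>]] .
qed

end

theorem theorem2p3:
  fixes C :: "('o, 'm) icat" and X K :: 'o and \<phi> \<kappa> :: 'm
  assumes "is_additive_inv_cat C"
    and "X \<in> Obj C" and "\<phi> \<in> Hom C X X"
    and "is_kernel C X X \<phi> K \<kappa>"
  shows "(has_core_inverse C X \<phi> \<longleftrightarrow>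
           (\<exists>L lm. is_cokernel C X X \<phi> L lm \<and>
              invertible C K L (cmp C \<kappa> lm) \<and>
              invertible C X X (addm C (cmp C (star C \<phi>) (cmp C \<phi> (cmp C \<phi> \<phi>)))
                                       (cmp C (star C \<kappa>) \<kappa>)))) \<and>
         (\<forall>L lm. has_core_inverse C X \<phi> \<and> is_cokernel C X X \<phi> L lm \<and>
           invertible C K L (cmp C \<kappa> lm) \<and>
           invertible C X X (addm C (cmp C (star C \<phi>) (cmp C \<phi> (cmp C \<phi> \<phi>)))
                                    (cmp C (star C \<kappa>) \<kappa>)) \<longrightarrow>
           is_cokernel C X X \<phi> K (cmp C lm (minv C K L (cmp C \<kappa> lm))) \<and>
           addm C (cmp C (core_inv C X \<phi>) \<phi>)
                  (cmp C (cmp C lm (minv C K L (cmp C \<kappa> lm))) \<kappa>) = idm C X \<and>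
           core_inv C X \<phi> =
             cmp C (cmp C \<phi> \<phi>)
               (cmp C (minv C X X (addm C (cmp C (star C \<phi>) (cmp C \<phi> (cmp C \<phi> \<phi>)))
                                          (cmp C (star C \<kappa>) \<kappa>)))
                      (star C \<phi>)))"
proof -
  interpret endo_with_kernel C X K \<phi> \<kappa>
    using assms by unfold_locales
  show ?thesis
    using has_core_inverse_iff_cokernel core_inv_of_cokernel by blast
qed

end
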